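(* Consider the linear (ReLU-free) encoder-decoder network described in the context. Fix $\alpha>0$. (1) (No skipped connection.) Suppose that for all $l\in[\kappa]$, $$\tilde\Phi^l\Phi^{l\top}=\alpha I_{m_{l-1}},\qquad \Psi^l\tilde\Psi^{l\top}=\frac{1}{r\alpha}I_{rq_{l-1}}.$$ Then, with $B=E^1E^2\cdots E^\kappa\in\mathbb R^{d_0\times d_\kappa}$ and $\tilde B=D^1D^2\cdots D^\kappa\in\mathbb R^{d_0\times d_\kappa}$, with columns $b_i,\tilde b_i$, one has $\tilde BB^\top=I_{d_0}$, i.e. $x=\sum_i\langle b_i,x\rangle\tilde b_i$ for every $x\in\mathbb R^{d_0}$; moreover the linear network without skipped connections satisfies $F(x)=\tilde BB^\top x$. (2) (With skipped connections.) Suppose that for all $l\in[\kappa]$, $$\tilde\Phi^l\Phi^{l\top}=\alpha I_{m_{l-1}},\qquad \Psi^l\tilde\Psi^{l\top}=\frac{1}{r(\alpha+1)}I_{rq_{l-1}}.$$ Define the $d_0\times(d_\kappa+\sum_{l=1}^\kappa s_l)$ matrices $$B^{skp}=\big[\,E^1\cdots E^\kappa,\ E^1\cdots E^{\kappa-1}S^\kappa,\ \dots,\ E^1S^2,\ S^1\,\big],\qquad \tilde B^{skp}=\big[\,D^1\cdots D^\kappa,\ D^1\cdots D^{\kappa-1}\tilde S^\kappa,\ \dots,\ D^1\tilde S^2,\ \tilde S^1\,\big].$$ Then the linear network with skipped connections satisfies $F(x)=\tilde B^{skp}B^{skp\top}x$, and $\tilde B^{skp}B^{skp\top}=I_{d_0}$,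 i.e. $x=\sum_i\langle b_i,x\rangle\tilde b_i$ with $b_i,\tilde b_i$ the columns of $B^{skp},\tilde B^{skp}$.
   Context: Conventions. For $m\ge1$, vectors in $\mathbb R^m$ are indexed $0,\dots,m-1$ with indices taken modulo $m$. For $u,v\in\mathbb R^m$ the circular convolution is $(u\circledast v)[n]=\sum_{k=0}^{m-1}u[k]\,v[n-k]$; a vector of length $r\le m$ is identified with its zero-padding to length $m$ when convolved with length-$m$ vectors. For a matrix $A=[a_1\cdots a_p]\in\mathbb R^{m\times p}$ and $\psi\in\mathbb R^r$, $A\circledast\psi:=[a_1\circledast\psi\ \cdots\ a_p\circledast\psi]\in\mathbb R^{m\times p}$. $[n]=\{1,\dots,n\}$. Architecture. Fix depth $\kappa\ge1$, channel numbers $q_0,\dots,q_\kappa$, channel lengths $m_0,\dots,m_\kappa$ and a filter length $r$ with $r\le m_l$ for all $l$; set $d_l=m_lq_l$ and $s_l=m_{l-1}q_l$. For each $l\in[\kappa]$ there are encoder filters $\psi^l_{j,k}\in\mathbb R^r$ ($j\in[q_l]$, $k\in[q_{l-1}]$), a pooling matrix $\Phi^l\in\mathbb R^{m_{l-1}\times m_l}$, decoder filters $\tilde\psi^l_{j,k}\in\mathbb R^r$ ($j\in[q_{l-1}]$, $k\in[q_l]$) and an unpooling matrix $\tilde\Phi^l\in\mathbb R^{m_{l-1}\times m_l}$. Define block matrices: $E^l\in\mathbb R^{d_{l-1}\times d_l}$ with $(k,j)$ block ($k\in[q_{l-1}],j\in[q_l]$) equal to $\Phi^l\circledast\psi^l_{j,k}$;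 $D^l\in\mathbb R^{d_{l-1}\times d_l}$ with $(j,k)$ block ($j\in[q_{l-1}],k\in[q_l]$) equal to $\tilde\Phi^l\circledast\tilde\psi^l_{j,k}$; $S^l\in\mathbb R^{d_{l-1}\times s_l}$ with $(k,j)$ block $I_{m_{l-1}}\circledast\psi^l_{j,k}$; $\tilde S^l\in\mathbb R^{d_{l-1}\times s_l}$ with $(j,k)$ block $I_{m_{l-1}}\circledast\tilde\psi^l_{j,k}$. Filter matrices: $\Psi^l\in\mathbb R^{rq_{l-1}\times q_l}$ whose $(k,j)$ block (an $r\times1$ column) is $\psi^l_{j,k}$, and $\tilde\Psi^l\in\mathbb R^{rq_{l-1}\times q_l}$ whose $(j,k)$ block is $\tilde\psi^l_{j,k}$. Linear network (no ReLU). Without skipped connections: $\xi^0=x\in\mathbb R^{d_0}$, $\xi^l=E^{l\top}\xi^{l-1}$ ($l\in[\kappa]$), $\tilde\xi^\kappa=\xi^\kappa$, $\tilde\xi^{l-1}=D^l\tilde\xi^l$, $F(x)=\tilde\xi^0$. With skipped connections: additionally $\chi^l=S^{l\top}\xi^{l-1}$ and the decoder is $\tilde\xi^{l-1}=D^l\tilde\xi^l+\tilde S^l\chi^l$, $F(x)=\tilde\xi^0$. *)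

theory Defs
  imports "Jordan_Normal_Form.Matrix"
begin

text \<open>Conventions: channel/filter indices j, k are 0-based (j < q l instead of j in [q l]);
  layer indices l range over 1..kappa; vectors of length m indexed 0..m-1, indices mod m.\<close>

definition pad :: "real vec \<Rightarrow> nat \<Rightarrow> real" where
  "pad \<psi> j = (if j < dim_vec \<psi> then \<psi> $ j else 0)"

definition cconv :: "real mat \<Rightarrow> real vec \<Rightarrow> real mat" where
  "cconv A \<psi> = mat (dim_row A) (dim_col A)
     (\<lambda>(i,c). \<Sum>k<dim_row A. A $$ (k,c) * pad \<psi> ((i + dim_row A - k) mod dim_row A))"

definition blockmat :: "nat \<Rightarrow> nat \<Rightarrow> nat \<Rightarrow> nat \<Rightarrow> (nat \<Rightarrow> nat \<Rightarrow> real mat) \<Rightarrow> real mat" where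
  "blockmat p q a b M = mat (p*a) (q*b) (\<lambda>(i,j). M (i div a) (j div b) $$ (i mod a, j mod b))"

text \<open>psi l j k = encoder filter psi^l_{j,k} (j < q l, k < q (l-1));
      psit l j k = decoder filter psit^l_{j,k} (j < q (l-1), k < q l).\<close>

definition encE :: "(nat \<Rightarrow> nat) \<Rightarrow> (nat \<Rightarrow> nat) \<Rightarrow> (nat \<Rightarrow> real mat)
    \<Rightarrow> (nat \<Rightarrow> nat \<Rightarrow> nat \<Rightarrow> real vec) \<Rightarrow> nat \<Rightarrow> real mat" where
  "encE m q \<Phi> \<psi> l = blockmat (q (l-1)) (q l) (m (l-1)) (m l) (\<lambda>k j. cconv (\<Phi> l) (\<psi> l j k))"

definition decD :: "(nat \<Rightarrow> nat) \<Rightarrow> (nat \<Rightarrow> nat) \<Rightarrow> (nat \<Rightarrow> real mat)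
    \<Rightarrow> (nat \<Rightarrow> nat \<Rightarrow> nat \<Rightarrow> real vec) \<Rightarrow> nat \<Rightarrow> real mat" where
  "decD m q \<Phi>t \<psi>t l = blockmat (q (l-1)) (q l) (m (l-1)) (m l) (\<lambda>j k. cconv (\<Phi>t l) (\<psi>t l j k))"

definition skipS :: "(nat \<Rightarrow> nat) \<Rightarrow> (nat \<Rightarrow> nat)
    \<Rightarrow> (nat \<Rightarrow> nat \<Rightarrow> nat \<Rightarrow> real vec) \<Rightarrow> nat \<Rightarrow> real mat" where
  "skipS m q \<psi> l = blockmat (q (l-1)) (q l) (m (l-1)) (m (l-1))
      (\<lambda>k j. cconv (1\<^sub>m (m (l-1))) (\<psi> l j k))"

definition skipSt :: "(nat \<Rightarrow> nat) \<Rightarrow> (nat \<Rightarrow> nat)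
    \<Rightarrow> (nat \<Rightarrow> nat \<Rightarrow> nat \<Rightarrow> real vec) \<Rightarrow> nat \<Rightarrow> real mat" where
  "skipSt m q \<psi>t l = blockmat (q (l-1)) (q l) (m (l-1)) (m (l-1))
      (\<lambda>j k. cconv (1\<^sub>m (m (l-1))) (\<psi>t l j k))"

text \<open>Filter matrices Psi^l (block (k,j) = psi^l_{j,k}) and Psit^l (block (j,k) = psit^l_{j,k}),
  both of size (r q_{l-1}) x q_l; entry (u*r+t, v) is entry t of the filter in block (u,v).\<close>
definition filtPsi :: "nat \<Rightarrow> (nat \<Rightarrow> nat) \<Rightarrow> (nat \<Rightarrow> nat \<Rightarrow> nat \<Rightarrow> real vec) \<Rightarrow> nat \<Rightarrow> real mat" where
  "filtPsi r q \<psi> l = mat (r * q (l-1)) (q l) (\<lambda>(i,c). \<psi> l c (i div r) $ (i mod r))"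

definition filtPsit :: "nat \<Rightarrow> (nat \<Rightarrow> nat) \<Rightarrow> (nat \<Rightarrow> nat \<Rightarrow> nat \<Rightarrow> real vec) \<Rightarrow> nat \<Rightarrow> real mat" where
  "filtPsit r q \<psi>t l = mat (r * q (l-1)) (q l) (\<lambda>(i,c). \<psi>t l (i div r) c $ (i mod r))"

fun chain :: "(nat \<Rightarrow> real mat) \<Rightarrow> nat \<Rightarrow> nat \<Rightarrow> real mat" where
  "chain M n 0 = 1\<^sub>m n"
| "chain M n (Suc k) = chain M n k * M (Suc k)"

definition hcat :: "real mat \<Rightarrow> real mat \<Rightarrow> real mat" where
  "hcat A B = mat (dim_row A) (dim_col A + dim_col B)
     (\<lambda>(i,j). if j < dim_col A then A $$ (i,j) else B $$ (i, j - dim_col A))"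

text \<open>[M1...Mk, M1...M(k-1) S k, ..., M1 S 2, S 1].\<close>
definition skip_frame :: "(nat \<Rightarrow> real mat) \<Rightarrow> (nat \<Rightarrow> real mat) \<Rightarrow> nat \<Rightarrow> nat \<Rightarrow> real mat" where
  "skip_frame M S n k = foldl hcat (chain M n k) (map (\<lambda>l. chain M n (l-1) * S l) (rev [1..<Suc k]))"

fun enc :: "(nat \<Rightarrow> real mat) \<Rightarrow> real vec \<Rightarrow> nat \<Rightarrow> real vec" where
  "enc E x 0 = x"
| "enc E x (Suc l) = transpose_mat (E (Suc l)) *\<^sub>v enc E x l"

fun dec :: "(nat \<Rightarrow> real mat) \<Rightarrow> nat \<Rightarrow> real vec \<Rightarrow> real vec" where
  "dec D 0 v = v"
| "dec D (Suc k) v = dec D k (D (Suc k) *\<^sub>v v)"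

fun dec_skip :: "(nat \<Rightarrow> real mat) \<Rightarrow> (nat \<Rightarrow> real mat) \<Rightarrow> (nat \<Rightarrow> real vec) \<Rightarrow> nat \<Rightarrow> real vec \<Rightarrow> real vec" where
  "dec_skip D St chi 0 v = v"
| "dec_skip D St chi (Suc k) v = dec_skip D St chi k (D (Suc k) *\<^sub>v v + St (Suc k) *\<^sub>v chi (Suc k))"

definition net_noskip :: "(nat \<Rightarrow> real mat) \<Rightarrow> (nat \<Rightarrow> real mat) \<Rightarrow> nat \<Rightarrow> real vec \<Rightarrow> real vec" where
  "net_noskip E D \<kappa> x = dec D \<kappa> (enc E x \<kappa>)"

definition net_skip :: "(nat \<Rightarrow> real mat) \<Rightarrow> (nat \<Rightarrow> real mat) \<Rightarrow> (nat \<Rightarrow> real mat) \<Rightarrow> (nat \<Rightarrow> real mat)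
    \<Rightarrow> nat \<Rightarrow> real vec \<Rightarrow> real vec" where
  "net_skip E D S St \<kappa> x =
     dec_skip D St (\<lambda>l. transpose_mat (S l) *\<^sub>v enc E x (l-1)) \<kappa> (enc E x \<kappa>)"

definition frame_expand :: "real mat \<Rightarrow> real mat \<Rightarrow> real vec \<Rightarrow> real vec" where
  "frame_expand B Bt x = vec (dim_row Bt) (\<lambda>a. \<Sum>i<dim_col B. (col B i \<bullet> x) * (col Bt i $ a))"

end

theory Submission
  imports Defs
begin

text \<open>Circular convolution with a filter is left multiplication by its circulant matrix, so
  block (j, j') of D_l E_l^T is a sum over channels of C_g (Phit_l Phi_l^T) C_f^T = alpha C_g C_f^T
  for circulants C_g, C_f.  Summed over channels, the filter condition Psi_l Psit_l^T = c I kills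
  every off-diagonal block and every off-diagonal entry, and each diagonal entry collects the r
  cyclic shifts that meet the filter support; hence D_l E_l^T = alpha c r I, and the same
  computation with identity pooling gives St_l S_l^T = c r I.  Without skipped connections
  alpha c r = 1 and these identities telescope along the chain of layers.  With skipped
  connections each layer splits the identity into alpha/(alpha+1) through the encoder-decoder path
  plus 1/(alpha+1) through the skip, so the frame operator still telescopes to the identity, and
  decoding inverts encoding layer by layer.\<close>

lemma sum_lessThan_mult_blocks:
  fixes h :: "nat \<Rightarrow> 'a::comm_monoid_add"
  shows "(\<Sum>c<q*b. h c) = (\<Sum>v<q. \<Sum>w<b. h (v*b + w))"
proof -
  have block: "sum h {v*b..<v*b+b} = (\<Sum>w<b. h (v*b + w))" for v
    using sum.shift_bounds_nat_ivl[of h 0 "v*b" b] by (simp add: atLeast0LessThan add.commute)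
  show ?thesis
    using sum.nat_group[of h b q] by (simp add: block)
qed

lemma sum_lessThan_add:
  fixes h :: "nat \<Rightarrow> 'a::comm_monoid_add"
  shows "(\<Sum>c<a+b. h c) = (\<Sum>c<a. h c) + (\<Sum>c<b. h (a + c))"
proof -
  have "(\<Sum>c<a+b. h c) = (\<Sum>c\<in>{0..<a}. h c) + (\<Sum>c\<in>{0+a..<b+a}. h c)"
    by (simp add: sum.atLeastLessThan_concat atLeast0LessThan[symmetric] add.commute)
  also have "(\<Sum>c\<in>{0+a..<b+a}. h c) = (\<Sum>c\<in>{0..<b}. h (c + a))"
    by (rule sum.shift_bounds_nat_ivl)
  finally show ?thesis by (simp add: atLeast0LessThan add.commute)
qed

lemma circ_index_eq:
  fixes x n a :: nat
  assumes "x < n" "a < n"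
  shows "(x + n - a) mod n = (if a \<le> x then x - a else x + n - a)"
proof (cases "a \<le> x")
  case True
  then have "(x + n - a) mod n = (x - a + n) mod n" by (simp add: add.commute)
  also have "\<dots> = x - a" using assms by (simp add: less_imp_diff_less)
  finally show ?thesis using True by simp
qed (use assms in simp)

lemma circ_index_involution:
  fixes x n a :: nat
  assumes "x < n" "a < n"
  shows "(x + n - (x + n - a) mod n) mod n = a"
proof (cases "a \<le> x")
  case True
  then have "x + n - (x - a) = a + n" using assms by simp
  then show ?thesis using True assms by (simp add: circ_index_eq)
qed (use assms in \<open>simp add: circ_index_eq\<close>)

lemma sum_circ_reindex:
  fixes x n :: nat
  assumes "x < n"
  shows "(\<Sum>a<n. h ((x + n - a) mod n)) = (\<Sum>t<n. h t)"
  by (rule sum.reindex_bij_witness[where i="\<lambda>t. (x + n - t) mod n" and j="\<lambda>t. (x + n - t) mod n"])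
    (use assms in \<open>auto simp: circ_index_involution\<close>)

lemma sum_circ_window:
  fixes c :: real and r n x y :: nat
  assumes "r \<le> n" "x < n" "y < n"
  shows "(\<Sum>a<n. if (y + n - a) mod n = (x + n - a) mod n \<and> (y + n - a) mod n < r then c else 0)
    = (if x = y then c * real r else 0)"
proof (cases "x = y")
  case True
  have "(\<Sum>a<n. if (x + n - a) mod n < r then c else 0) = (\<Sum>t<n. if t < r then c else 0)"
    using sum_circ_reindex[OF \<open>x < n\<close>, of "\<lambda>t. if t < r then c else 0"] by simp
  also have "\<dots> = (\<Sum>t<r. c)"
    by (rule sum.mono_neutral_cong_right) (use assms in auto)
  finally show ?thesis using True by simp
next
  case False
  then have "(y + n - a) mod n \<noteq> (x + n - a) mod n" if "a < n" for a
    using assms that by (auto simp: circ_index_eq split: if_splits)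
  then show ?thesis using False by simp
qed

lemma one_smult_mat [simp]: "(1::'a::semiring_1) \<cdot>\<^sub>m A = A"
  by (rule eq_matI) auto

lemma sandwich_mult_transpose:
  fixes X Y D E :: "'a::comm_ring_1 mat"
  assumes X: "X \<in> carrier_mat n k" and Y: "Y \<in> carrier_mat n' k"
    and D: "D \<in> carrier_mat k p" and E: "E \<in> carrier_mat k p"
    and DE: "D * transpose_mat E = s \<cdot>\<^sub>m 1\<^sub>m k"
  shows "(X * D) * transpose_mat (Y * E) = s \<cdot>\<^sub>m (X * transpose_mat Y)"
proof -
  have "(X * D) * transpose_mat (Y * E) = X * ((D * transpose_mat E) * transpose_mat Y)"
    using X Y D E by (simp add: transpose_mult assoc_mult_mat[of _ n k _ p _ n'])
  also have "\<dots> = X * (s \<cdot>\<^sub>m transpose_mat Y)"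
    unfolding DE using Y by (simp add: mult_smult_assoc_mat[of _ k k])
  also have "\<dots> = s \<cdot>\<^sub>m (X * transpose_mat Y)"
    using X Y by (simp add: mult_smult_distrib[of _ n k])
  finally show ?thesis .
qed

definition circ :: "nat \<Rightarrow> real vec \<Rightarrow> real mat" where
  "circ n \<psi> = mat n n (\<lambda>(i,k). pad \<psi> ((i + n - k) mod n))"

lemma circ_carrier [simp]: "circ n \<psi> \<in> carrier_mat n n"
  by (simp add: circ_def)

lemma cconv_carrier [simp]: "A \<in> carrier_mat n p \<Longrightarrow> cconv A \<psi> \<in> carrier_mat n p"
  by (simp add: cconv_def)

lemma cconv_eq_circ_mult: "cconv A \<psi> = circ (dim_row A) \<psi> * A"
  by (rule eq_matI)
    (auto simp: cconv_def circ_def scalar_prod_def mult.commute atLeast0LessThan intro: sum.cong)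

lemma cconv_mult_transpose_cconv_entry:
  assumes A: "A \<in> carrier_mat n p" and A': "A' \<in> carrier_mat n p"
    and AA: "A' * transpose_mat A = \<beta> \<cdot>\<^sub>m 1\<^sub>m n" and x: "x < n" and y: "y < n"
  shows "(cconv A' g * transpose_mat (cconv A f)) $$ (x, y)
    = \<beta> * (\<Sum>a<n. pad g ((x + n - a) mod n) * pad f ((y + n - a) mod n))"
proof -
  have "cconv A' g * transpose_mat (cconv A f) = \<beta> \<cdot>\<^sub>m (circ n g * transpose_mat (circ n f))"
    using sandwich_mult_transpose[OF circ_carrier circ_carrier A' A AA] A A'
    by (simp add: cconv_eq_circ_mult)
  then show ?thesis
    using x y by (simp add: circ_def scalar_prod_def atLeast0LessThan)
qed

lemma blockmat_mult_transpose_entry: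
  assumes i: "i < p*a" and i': "i' < p'*a'"
    and M: "\<And>v. v < q \<Longrightarrow> M (i div a) v \<in> carrier_mat a b"
    and N: "\<And>v. v < q \<Longrightarrow> N (i' div a') v \<in> carrier_mat a' b"
  shows "(blockmat p q a b M * transpose_mat (blockmat p' q a' b N)) $$ (i,i')
     = (\<Sum>v<q. (M (i div a) v * transpose_mat (N (i' div a') v)) $$ (i mod a, i' mod a'))"
proof -
  have a: "0 < a" using i by (cases a) auto
  have a': "0 < a'" using i' by (cases a') auto
  have "(blockmat p q a b M * transpose_mat (blockmat p' q a' b N)) $$ (i,i')
     = (\<Sum>c<q*b. M (i div a) (c div b) $$ (i mod a, c mod b) * N (i' div a') (c div b) $$ (i' mod a', c mod b))"
    using i i' by (simp add: blockmat_def scalar_prod_def atLeast0LessThan)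
  also have "\<dots> = (\<Sum>v<q. \<Sum>w<b. M (i div a) v $$ (i mod a, w) * N (i' div a') v $$ (i' mod a', w))"
    by (simp add: sum_lessThan_mult_blocks)
  also have "\<dots> = (\<Sum>v<q. (M (i div a) v * transpose_mat (N (i' div a') v)) $$ (i mod a, i' mod a'))"
  proof (intro sum.cong refl)
    fix v assume "v \<in> {..<q}"
    then have "M (i div a) v \<in> carrier_mat a b" "N (i' div a') v \<in> carrier_mat a' b"
      using M N by auto
    then show "(\<Sum>w<b. M (i div a) v $$ (i mod a, w) * N (i' div a') v $$ (i' mod a', w))
      = (M (i div a) v * transpose_mat (N (i' div a') v)) $$ (i mod a, i' mod a')"
      using a a' by (simp add: scalar_prod_def atLeast0LessThan)
  qed
  finally show ?thesis .
qed

lemma sum_pad_filters: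
  assumes fdim: "\<forall>v<Q. dim_vec (f v k') = r" and gdim: "\<forall>v<Q. dim_vec (g j v) = r"
    and gram: "\<forall>t<r. \<forall>t'<r. (\<Sum>v<Q. f v k' $ t * g j v $ t') = (if k' = j \<and> t = t' then c else 0)"
  shows "(\<Sum>v<Q. pad (g j v) t' * pad (f v k') t) = (if k' = j \<and> t = t' \<and> t < r then c else 0)"
proof (cases "t < r \<and> t' < r")
  case True
  then have "(\<Sum>v<Q. pad (g j v) t' * pad (f v k') t) = (\<Sum>v<Q. f v k' $ t * g j v $ t')"
    using fdim gdim by (intro sum.cong refl) (simp add: pad_def mult.commute)
  then show ?thesis using gram True by simp
next
  case False
  then have "(\<Sum>v<Q. pad (g j v) t' * pad (f v k') t) = 0"
    using fdim gdim by (intro sum.neutral) (auto simp: pad_def)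
  then show ?thesis using False by auto
qed

lemma blockmat_cconv_gram:
  fixes A A' :: "real mat" and f g :: "nat \<Rightarrow> nat \<Rightarrow> real vec"
  assumes rn: "r \<le> n"
    and A: "A \<in> carrier_mat n p" and A': "A' \<in> carrier_mat n p"
    and AA: "A' * transpose_mat A = \<beta> \<cdot>\<^sub>m 1\<^sub>m n"
    and fdim: "\<forall>v<Q1. \<forall>u<Q0. dim_vec (f v u) = r"
    and gdim: "\<forall>u<Q0. \<forall>v<Q1. dim_vec (g u v) = r"
    and gram: "\<forall>u<Q0. \<forall>u'<Q0. \<forall>t<r. \<forall>t'<r.
        (\<Sum>v<Q1. f v u $ t * g u' v $ t') = (if u = u' \<and> t = t' then c else 0)"
  shows "blockmat Q0 Q1 n p (\<lambda>j k. cconv A' (g j k))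
          * transpose_mat (blockmat Q0 Q1 n p (\<lambda>k j. cconv A (f j k)))
        = (\<beta> * c * real r) \<cdot>\<^sub>m 1\<^sub>m (Q0 * n)"
    (is "?G = _")
proof (rule eq_matI)
  fix i i' assume "i < dim_row ((\<beta> * c * real r) \<cdot>\<^sub>m 1\<^sub>m (Q0 * n))"
    and "i' < dim_col ((\<beta> * c * real r) \<cdot>\<^sub>m 1\<^sub>m (Q0 * n))"
  then have i: "i < Q0 * n" and i': "i' < Q0 * n" by auto
  define j k' x y where "j = i div n" and "k' = i' div n" and "x = i mod n" and "y = i' mod n"
  have "0 < n" using i by (cases n) auto
  then have j: "j < Q0" and k': "k' < Q0" and x: "x < n" and y: "y < n"
    using i i' by (auto simp: j_def k'_def x_def y_def less_mult_imp_div_less)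
  have pad_sum: "(\<Sum>v<Q1. pad (g j v) t' * pad (f v k') t) = (if k' = j \<and> t = t' \<and> t < r then c else 0)"
    for t t' using fdim gdim gram j k' by (intro sum_pad_filters) auto
  have "?G $$ (i,i') = (\<Sum>v<Q1. (cconv A' (g j v) * transpose_mat (cconv A (f v k'))) $$ (x, y))"
    unfolding j_def k'_def x_def y_def
    by (rule blockmat_mult_transpose_entry[OF i i']) (use A A' in auto)
  also have "\<dots> = (\<Sum>v<Q1. \<beta> * (\<Sum>a<n. pad (g j v) ((x + n - a) mod n) * pad (f v k') ((y + n - a) mod n)))"
    by (simp add: cconv_mult_transpose_cconv_entry[OF A A' AA x y])
  also have "\<dots> = \<beta> * (\<Sum>a<n. \<Sum>v<Q1. pad (g j v) ((x + n - a) mod n) * pad (f v k') ((y + n - a) mod n))"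
    by (simp add: sum_distrib_left sum.swap[of _ "{..<n}"])
  also have "\<dots> = \<beta> * (\<Sum>a<n. if k' = j \<and> (y + n - a) mod n = (x + n - a) mod n \<and> (y + n - a) mod n < r
                          then c else 0)"
    by (simp only: pad_sum)
  also have "\<dots> = (if k' = j \<and> x = y then \<beta> * c * real r else 0)"
    by (cases "k' = j") (simp_all add: sum_circ_window[OF rn x y])
  also have "\<dots> = ((\<beta> * c * real r) \<cdot>\<^sub>m 1\<^sub>m (Q0 * n)) $$ (i, i')"
  proof -
    have "(k' = j \<and> x = y) = (i = i')"
      unfolding j_def k'_def x_def y_def by (metis div_mult_mod_eq)
    then show ?thesis using i i' by simp
  qed
  finally show "?G $$ (i,i') = ((\<beta> * c * real r) \<cdot>\<^sub>m 1\<^sub>m (Q0 * n)) $$ (i, i')" .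
qed (simp_all add: blockmat_def)

lemma filtPsi_gram_entry:
  assumes gram: "filtPsi r q \<psi> l * transpose_mat (filtPsit r q \<psi>t l) = c \<cdot>\<^sub>m 1\<^sub>m (r * q (l-1))"
    and u: "u < q (l-1)" and u': "u' < q (l-1)" and t: "t < r" and t': "t' < r"
  shows "(\<Sum>v<q l. \<psi> l v u $ t * \<psi>t l u' v $ t') = (if u = u' \<and> t = t' then c else 0)"
proof -
  have idx: "w*r + s < r * q (l-1)" "(w*r + s) div r = w" "(w*r + s) mod r = s"
    if "w < q (l-1)" "s < r" for w s
  proof -
    have "w*r + s < (w+1)*r" using that by simp
    also have "\<dots> \<le> q (l-1) * r" using that by (intro mult_le_mono1) simp
    finally show "w*r + s < r * q (l-1)" by (simp add: mult.commute)
  qed (use that in auto)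
  have "(filtPsi r q \<psi> l * transpose_mat (filtPsit r q \<psi>t l)) $$ (u*r+t, u'*r+t')
      = (\<Sum>v<q l. \<psi> l v u $ t * \<psi>t l u' v $ t')"
    using idx[OF u t] idx[OF u' t']
    by (simp add: filtPsi_def filtPsit_def scalar_prod_def atLeast0LessThan)
  moreover have "(c \<cdot>\<^sub>m 1\<^sub>m (r * q (l-1))) $$ (u*r+t, u'*r+t') = (if u = u' \<and> t = t' then c else 0)"
  proof -
    have "(u*r+t = u'*r+t') = (u = u' \<and> t = t')"
      using idx[OF u t] idx[OF u' t'] by metis
    then show ?thesis using idx[OF u t] idx[OF u' t'] by simp
  qed
  ultimately show ?thesis
    using gram by simp
qed

lemma layer_grams:
  assumes r_le: "r \<le> m (l-1)"
    and Phi: "\<Phi> l \<in> carrier_mat (m (l-1)) (m l)" and Phit: "\<Phi>t l \<in> carrier_mat (m (l-1)) (m l)"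
    and psi_dim: "\<forall>j<q l. \<forall>k<q (l-1). dim_vec (\<psi> l j k) = r"
    and psit_dim: "\<forall>j<q (l-1). \<forall>k<q l. dim_vec (\<psi>t l j k) = r"
    and pool: "\<Phi>t l * transpose_mat (\<Phi> l) = \<alpha> \<cdot>\<^sub>m 1\<^sub>m (m (l-1))"
    and filt: "filtPsi r q \<psi> l * transpose_mat (filtPsit r q \<psi>t l) = c \<cdot>\<^sub>m 1\<^sub>m (r * q (l-1))"
  shows "decD m q \<Phi>t \<psi>t l * transpose_mat (encE m q \<Phi> \<psi> l)
           = (\<alpha> * c * real r) \<cdot>\<^sub>m 1\<^sub>m (q (l-1) * m (l-1))"
    and "skipSt m q \<psi>t l * transpose_mat (skipS m q \<psi> l) = (c * real r) \<cdot>\<^sub>m 1\<^sub>m (q (l-1) * m (l-1))"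
proof -
  have gram: "\<forall>u<q (l-1). \<forall>u'<q (l-1). \<forall>t<r. \<forall>t'<r.
        (\<Sum>v<q l. \<psi> l v u $ t * \<psi>t l u' v $ t') = (if u = u' \<and> t = t' then c else 0)"
    using filtPsi_gram_entry[OF filt] by blast
  show "decD m q \<Phi>t \<psi>t l * transpose_mat (encE m q \<Phi> \<psi> l)
           = (\<alpha> * c * real r) \<cdot>\<^sub>m 1\<^sub>m (q (l-1) * m (l-1))"
    unfolding decD_def encE_def by (rule blockmat_cconv_gram[OF r_le Phi Phit pool psi_dim psit_dim gram])
  have "1\<^sub>m (m (l-1)) * transpose_mat (1\<^sub>m (m (l-1))) = (1::real) \<cdot>\<^sub>m 1\<^sub>m (m (l-1))"
    by simp
  from blockmat_cconv_gram[OF r_le one_carrier_mat one_carrier_mat this psi_dim psit_dim gram]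
  show "skipSt m q \<psi>t l * transpose_mat (skipS m q \<psi> l) = (c * real r) \<cdot>\<^sub>m 1\<^sub>m (q (l-1) * m (l-1))"
    unfolding skipSt_def skipS_def by simp
qed

lemma network_layer_grams:
  assumes r_le: "\<forall>l\<le>\<kappa>. r \<le> m l"
    and Phi_dim: "\<forall>l\<in>{1..\<kappa>}. \<Phi> l \<in> carrier_mat (m (l-1)) (m l)"
    and Phit_dim: "\<forall>l\<in>{1..\<kappa>}. \<Phi>t l \<in> carrier_mat (m (l-1)) (m l)"
    and psi_dim: "\<forall>l\<in>{1..\<kappa>}. \<forall>j<q l. \<forall>k<q (l-1). dim_vec (\<psi> l j k) = r"
    and psit_dim: "\<forall>l\<in>{1..\<kappa>}. \<forall>j<q (l-1). \<forall>k<q l. dim_vec (\<psi>t l j k) = r"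
    and frame: "\<forall>l\<in>{1..\<kappa>}. \<Phi>t l * transpose_mat (\<Phi> l) = \<alpha> \<cdot>\<^sub>m 1\<^sub>m (m (l-1))
          \<and> filtPsi r q \<psi> l * transpose_mat (filtPsit r q \<psi>t l) = c \<cdot>\<^sub>m 1\<^sub>m (r * q (l-1))"
  shows "\<forall>l\<in>{1..\<kappa>}. decD m q \<Phi>t \<psi>t l * transpose_mat (encE m q \<Phi> \<psi> l)
              = (\<alpha> * c * real r) \<cdot>\<^sub>m 1\<^sub>m (q (l-1) * m (l-1))
          \<and> skipSt m q \<psi>t l * transpose_mat (skipS m q \<psi> l) = (c * real r) \<cdot>\<^sub>m 1\<^sub>m (q (l-1) * m (l-1))"
proof
  fix l assume l: "l \<in> {1..\<kappa>}"
  then have "r \<le> m (l-1)" "\<Phi> l \<in> carrier_mat (m (l-1)) (m l)" "\<Phi>t l \<in> carrier_mat (m (l-1)) (m l)"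
    "\<forall>j<q l. \<forall>k<q (l-1). dim_vec (\<psi> l j k) = r" "\<forall>j<q (l-1). \<forall>k<q l. dim_vec (\<psi>t l j k) = r"
    "\<Phi>t l * transpose_mat (\<Phi> l) = \<alpha> \<cdot>\<^sub>m 1\<^sub>m (m (l-1))"
    "filtPsi r q \<psi> l * transpose_mat (filtPsit r q \<psi>t l) = c \<cdot>\<^sub>m 1\<^sub>m (r * q (l-1))"
    using assms by auto
  from layer_grams[where m = m and q = q and l = l and \<Phi> = \<Phi> and \<Phi>t = \<Phi>t
      and \<psi> = \<psi> and \<psi>t = \<psi>t, OF this]
  show "decD m q \<Phi>t \<psi>t l * transpose_mat (encE m q \<Phi> \<psi> l)
          = (\<alpha> * c * real r) \<cdot>\<^sub>m 1\<^sub>m (q (l-1) * m (l-1))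
      \<and> skipSt m q \<psi>t l * transpose_mat (skipS m q \<psi> l) = (c * real r) \<cdot>\<^sub>m 1\<^sub>m (q (l-1) * m (l-1))" ..
qed

lemma smult_one_mult_mat_vec:
  fixes w :: "'a::comm_ring_1 vec"
  assumes "w \<in> carrier_vec n"
  shows "(s \<cdot>\<^sub>m 1\<^sub>m n) *\<^sub>v w = s \<cdot>\<^sub>v w"
proof (rule eq_vecI)
  fix i assume "i < dim_vec (s \<cdot>\<^sub>v w)"
  then have i: "i < n" using assms by simp
  have "((s \<cdot>\<^sub>m 1\<^sub>m n) *\<^sub>v w) $ i = (\<Sum>k<n. s * (if k = i then 1 else 0) * w $ k)"
    using i assms by (simp add: scalar_prod_def atLeast0LessThan)
  also have "\<dots> = (\<Sum>k<n. if k = i then s * w $ i else 0)"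
    by (rule sum.cong) auto
  finally show "((s \<cdot>\<^sub>m 1\<^sub>m n) *\<^sub>v w) $ i = (s \<cdot>\<^sub>v w) $ i" using i assms by simp
qed (use assms in simp)

lemma mult_transpose_mult_vec:
  fixes D E :: "'a::comm_ring_1 mat"
  assumes "D \<in> carrier_mat k p" "E \<in> carrier_mat k p" "w \<in> carrier_vec k"
    and DE: "D * transpose_mat E = s \<cdot>\<^sub>m 1\<^sub>m k"
  shows "D *\<^sub>v (transpose_mat E *\<^sub>v w) = s \<cdot>\<^sub>v w"
proof -
  have "D *\<^sub>v (transpose_mat E *\<^sub>v w) = (D * transpose_mat E) *\<^sub>v w"
    using assms(1-3) by simp
  also have "\<dots> = s \<cdot>\<^sub>v w"
    unfolding DE using assms(3) by (rule smult_one_mult_mat_vec)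
  finally show ?thesis .
qed

lemma hcat_dims [simp]:
  "dim_row (hcat A B) = dim_row A" "dim_col (hcat A B) = dim_col A + dim_col B"
  by (simp_all add: hcat_def)

lemma hcat_mult_transpose:
  assumes "dim_row B = dim_row A" "dim_row B' = dim_row A'"
    and "dim_col A' = dim_col A" "dim_col B' = dim_col B"
  shows "hcat A B * transpose_mat (hcat A' B') = A * transpose_mat A' + B * transpose_mat B'"
proof (rule eq_matI)
  fix i j assume "i < dim_row (A * transpose_mat A' + B * transpose_mat B')"
    and "j < dim_col (A * transpose_mat A' + B * transpose_mat B')"
  then have i: "i < dim_row A" and j: "j < dim_row A'" using assms by auto
  have "(hcat A B * transpose_mat (hcat A' B')) $$ (i,j)
     = (\<Sum>c<dim_col A + dim_col B. (if c < dim_col A then A $$ (i,c) else B $$ (i, c - dim_col A))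
          * (if c < dim_col A then A' $$ (j,c) else B' $$ (j, c - dim_col A)))"
    using i j assms by (simp add: hcat_def scalar_prod_def atLeast0LessThan)
      (rule sum.cong; simp add: assms(3))
  also have "\<dots> = (\<Sum>c<dim_col A. A $$ (i,c) * A' $$ (j,c)) + (\<Sum>c<dim_col B. B $$ (i,c) * B' $$ (j,c))"
    by (simp add: sum_lessThan_add)
  also have "\<dots> = (A * transpose_mat A' + B * transpose_mat B') $$ (i,j)"
    using i j assms by (simp add: scalar_prod_def atLeast0LessThan)
  finally show "(hcat A B * transpose_mat (hcat A' B')) $$ (i,j)
    = (A * transpose_mat A' + B * transpose_mat B') $$ (i,j)" .
qed (use assms in auto)

lemma foldl_hcat_dim_row: "dim_row (foldl hcat A (map h xs)) = dim_row A"
  by (induction xs arbitrary: A) auto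

lemma foldl_hcat_dim_col:
  "\<forall>l\<in>set xs. dim_col (h l) = dim_col (h' l) \<Longrightarrow> dim_col A = dim_col A'
    \<Longrightarrow> dim_col (foldl hcat A (map h xs)) = dim_col (foldl hcat A' (map h' xs))"
  by (induction xs arbitrary: A A') auto

lemma foldl_hcat_mult_transpose:
  assumes "\<forall>l\<in>set xs. dim_row (h l) = dim_row A \<and> dim_row (h' l) = dim_row A'
                      \<and> dim_col (h l) = dim_col (h' l)"
    and "dim_col A = dim_col A'"
  shows "foldl hcat A (map h xs) * transpose_mat (foldl hcat A' (map h' xs))
     = foldl (\<lambda>G l. G + h l * transpose_mat (h' l)) (A * transpose_mat A') xs"
  using assms
proof (induction xs arbitrary: A A')
  case (Cons x xs)
  have "foldl hcat (hcat A (h x)) (map h xs) * transpose_mat (foldl hcat (hcat A' (h' x)) (map h' xs))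
     = foldl (\<lambda>G l. G + h l * transpose_mat (h' l)) (hcat A (h x) * transpose_mat (hcat A' (h' x))) xs"
    by (rule Cons.IH) (use Cons.prems in auto)
  also have "hcat A (h x) * transpose_mat (hcat A' (h' x)) = A * transpose_mat A' + h x * transpose_mat (h' x)"
    by (rule hcat_mult_transpose) (use Cons.prems in auto)
  finally show ?case by simp
qed simp

lemma frame_expand_eq_mult:
  assumes "dim_vec x = dim_row B" "dim_col Bt = dim_col B"
  shows "frame_expand B Bt x = (Bt * transpose_mat B) *\<^sub>v x"
proof (rule eq_vecI)
  fix a assume "a < dim_vec ((Bt * transpose_mat B) *\<^sub>v x)"
  then have a: "a < dim_row Bt" by simp
  have "frame_expand B Bt x $ a = (\<Sum>i<dim_col B. (\<Sum>b<dim_row B. B $$ (b,i) * x $ b) * Bt $$ (a,i))"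
    using a assms by (simp add: frame_expand_def scalar_prod_def atLeast0LessThan)
  also have "\<dots> = (\<Sum>b<dim_row B. (\<Sum>i<dim_col B. Bt $$ (a,i) * B $$ (b,i)) * x $ b)"
    by (simp add: sum_distrib_left sum_distrib_right sum.swap[of _ "{..<dim_col B}"] ac_simps)
  also have "\<dots> = ((Bt * transpose_mat B) *\<^sub>v x) $ a"
    using a assms by (simp add: scalar_prod_def atLeast0LessThan)
  finally show "frame_expand B Bt x $ a = ((Bt * transpose_mat B) *\<^sub>v x) $ a" .
qed (simp add: frame_expand_def)

lemma carrier_mat_Suc_layer:
  assumes "\<And>l. M l \<in> carrier_mat (d (l-1)) (d l)"
  shows "M (Suc k) \<in> carrier_mat (d k) (d (Suc k))"
  using assms[of "Suc k"] by simp

lemma dim_row_chain [simp]: "dim_row (chain M n k) = n"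
  by (induction k) auto

lemma chain_carrier:
  assumes "\<And>l. M l \<in> carrier_mat (d (l-1)) (d l)"
  shows "chain M (d 0) k \<in> carrier_mat (d 0) (d k)"
  using carrier_mat_Suc_layer[of M d, OF assms] by (induction k) auto

lemma enc_carrier:
  assumes "\<And>l. E l \<in> carrier_mat (d (l-1)) (d l)" and "x \<in> carrier_vec (d 0)"
  shows "enc E x k \<in> carrier_vec (d k)"
  using carrier_mat_Suc_layer[of E d, OF assms(1)] assms(2)
  by (induction k) (auto intro!: mult_mat_vec_carrier transpose_carrier_mat)

lemma chain_gram:
  assumes E: "\<And>l. E l \<in> carrier_mat (d (l-1)) (d l)"
    and D: "\<And>l. D l \<in> carrier_mat (d (l-1)) (d l)"
    and DE: "\<forall>l\<in>{1..k}. D l * transpose_mat (E l) = 1\<^sub>m (d (l-1))"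
  shows "chain D (d 0) k * transpose_mat (chain E (d 0) k) = 1\<^sub>m (d 0)"
  using DE
proof (induction k)
  case (Suc k)
  have "D (Suc k) * transpose_mat (E (Suc k)) = 1 \<cdot>\<^sub>m 1\<^sub>m (d k)"
    using Suc.prems by simp
  from sandwich_mult_transpose[OF chain_carrier[of D d, OF D] chain_carrier[of E d, OF E]
      carrier_mat_Suc_layer[of D d, OF D] carrier_mat_Suc_layer[of E d, OF E] this]
  show ?case using Suc by simp
qed simp

lemma dec_enc_eq:
  assumes E: "\<And>l. E l \<in> carrier_mat (d (l-1)) (d l)"
    and D: "\<And>l. D l \<in> carrier_mat (d (l-1)) (d l)"
    and DE: "\<forall>l\<in>{1..k}. D l * transpose_mat (E l) = 1\<^sub>m (d (l-1))"
    and x: "x \<in> carrier_vec (d 0)"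
  shows "dec D k (enc E x k) = x"
  using DE
proof (induction k)
  case (Suc k)
  have "D (Suc k) * transpose_mat (E (Suc k)) = 1 \<cdot>\<^sub>m 1\<^sub>m (d k)"
    using Suc.prems by simp
  from mult_transpose_mult_vec[OF carrier_mat_Suc_layer[of D d, OF D]
      carrier_mat_Suc_layer[of E d, OF E] enc_carrier[of E d, OF E x] this]
  show ?case using Suc by simp
qed simp

lemma skip_gram_telescope:
  assumes E: "\<And>l. E l \<in> carrier_mat (d (l-1)) (d l)"
    and D: "\<And>l. D l \<in> carrier_mat (d (l-1)) (d l)"
    and S: "\<And>l. S l \<in> carrier_mat (d (l-1)) (e l)"
    and St: "\<And>l. St l \<in> carrier_mat (d (l-1)) (e l)"
    and DE: "\<forall>l\<in>{1..k}. D l * transpose_mat (E l) = a \<cdot>\<^sub>m 1\<^sub>m (d (l-1))"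
    and SS: "\<forall>l\<in>{1..k}. St l * transpose_mat (S l) = b \<cdot>\<^sub>m 1\<^sub>m (d (l-1))"
    and ab: "a + b = 1"
  shows "foldl (\<lambda>G l. G + (chain D (d 0) (l-1) * St l) * transpose_mat (chain E (d 0) (l-1) * S l))
           (chain D (d 0) k * transpose_mat (chain E (d 0) k)) (rev [1..<Suc k]) = 1\<^sub>m (d 0)"
  using DE SS
proof (induction k)
  case (Suc k)
  let ?P = "chain D (d 0) k * transpose_mat (chain E (d 0) k)"
  note CD = chain_carrier[of D d, OF D] and CE = chain_carrier[of E d, OF E]
  have "S (Suc k) \<in> carrier_mat (d k) (e (Suc k))" "St (Suc k) \<in> carrier_mat (d k) (e (Suc k))"
    using S[of "Suc k"] St[of "Suc k"] by simp_all
  from sandwich_mult_transpose[OF CD CE this(2,1)]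
  have skip: "(chain D (d 0) k * St (Suc k)) * transpose_mat (chain E (d 0) k * S (Suc k)) = b \<cdot>\<^sub>m ?P"
    using Suc.prems by simp
  from sandwich_mult_transpose[OF CD CE carrier_mat_Suc_layer[of D d, OF D] carrier_mat_Suc_layer[of E d, OF E]]
  have path: "(chain D (d 0) k * D (Suc k)) * transpose_mat (chain E (d 0) k * E (Suc k)) = a \<cdot>\<^sub>m ?P"
    using Suc.prems by simp
  have P: "?P \<in> carrier_mat (d 0) (d 0)"
    using CD[of k] CE[of k] by (auto intro: mult_carrier_mat)
  have "a \<cdot>\<^sub>m ?P + b \<cdot>\<^sub>m ?P = (a + b) \<cdot>\<^sub>m ?P"
    by (rule add_smult_distrib_right_mat[OF P, symmetric])
  also have "\<dots> = ?P" using ab by simp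
  finally have "a \<cdot>\<^sub>m ?P + b \<cdot>\<^sub>m ?P = ?P" .
  then show ?case using Suc path skip by simp
qed simp

lemma skip_frame_gram:
  assumes E: "\<And>l. E l \<in> carrier_mat (d (l-1)) (d l)"
    and D: "\<And>l. D l \<in> carrier_mat (d (l-1)) (d l)"
    and S: "\<And>l. S l \<in> carrier_mat (d (l-1)) (e l)"
    and St: "\<And>l. St l \<in> carrier_mat (d (l-1)) (e l)"
    and DE: "\<forall>l\<in>{1..k}. D l * transpose_mat (E l) = a \<cdot>\<^sub>m 1\<^sub>m (d (l-1))"
    and SS: "\<forall>l\<in>{1..k}. St l * transpose_mat (S l) = b \<cdot>\<^sub>m 1\<^sub>m (d (l-1))"
    and ab: "a + b = 1"
  shows "skip_frame D St (d 0) k * transpose_mat (skip_frame E S (d 0) k) = 1\<^sub>m (d 0)"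
proof -
  have dims: "dim_row (chain D (d 0) (l-1) * St l) = dim_row (chain D (d 0) k)"
    "dim_row (chain E (d 0) (l-1) * S l) = dim_row (chain E (d 0) k)"
    "dim_col (chain D (d 0) (l-1) * St l) = dim_col (chain E (d 0) (l-1) * S l)" for l
    using S[of l] St[of l] by simp_all
  have "skip_frame D St (d 0) k * transpose_mat (skip_frame E S (d 0) k)
     = foldl (\<lambda>G l. G + (chain D (d 0) (l-1) * St l) * transpose_mat (chain E (d 0) (l-1) * S l))
         (chain D (d 0) k * transpose_mat (chain E (d 0) k)) (rev [1..<Suc k])"
    unfolding skip_frame_def
    by (rule foldl_hcat_mult_transpose)
      (use dims chain_carrier[of D d, OF D, of k] chain_carrier[of E d, OF E, of k] in auto)
  also have "\<dots> = 1\<^sub>m (d 0)"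
    by (rule skip_gram_telescope[OF E D S St DE SS ab])
  finally show ?thesis .
qed

lemma dec_skip_enc_eq:
  assumes E: "\<And>l. E l \<in> carrier_mat (d (l-1)) (d l)"
    and D: "\<And>l. D l \<in> carrier_mat (d (l-1)) (d l)"
    and S: "\<And>l. S l \<in> carrier_mat (d (l-1)) (e l)"
    and St: "\<And>l. St l \<in> carrier_mat (d (l-1)) (e l)"
    and DE: "\<forall>l\<in>{1..k}. D l * transpose_mat (E l) = a \<cdot>\<^sub>m 1\<^sub>m (d (l-1))"
    and SS: "\<forall>l\<in>{1..k}. St l * transpose_mat (S l) = b \<cdot>\<^sub>m 1\<^sub>m (d (l-1))"
    and ab: "a + b = 1"
    and x: "x \<in> carrier_vec (d 0)"
  shows "dec_skip D St (\<lambda>l. transpose_mat (S l) *\<^sub>v enc E x (l-1)) k (enc E x k) = x"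
    (is "dec_skip D St ?chi k (enc E x k) = x")
  using DE SS
proof (induction k)
  case (Suc k)
  have w: "enc E x k \<in> carrier_vec (d k)"
    using enc_carrier[of E d, OF E x] .
  have "S (Suc k) \<in> carrier_mat (d k) (e (Suc k))" "St (Suc k) \<in> carrier_mat (d k) (e (Suc k))"
    using S[of "Suc k"] St[of "Suc k"] by simp_all
  from mult_transpose_mult_vec[OF this(2,1) w]
  have skip: "St (Suc k) *\<^sub>v (transpose_mat (S (Suc k)) *\<^sub>v enc E x k) = b \<cdot>\<^sub>v enc E x k"
    using Suc.prems by simp
  from mult_transpose_mult_vec[OF carrier_mat_Suc_layer[of D d, OF D] carrier_mat_Suc_layer[of E d, OF E] w]
  have path: "D (Suc k) *\<^sub>v (transpose_mat (E (Suc k)) *\<^sub>v enc E x k) = a \<cdot>\<^sub>v enc E x k"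
    using Suc.prems by simp
  have split: "a \<cdot>\<^sub>v enc E x k + b \<cdot>\<^sub>v enc E x k = enc E x k"
    using add_smult_distrib_vec[of a b "enc E x k"] ab by simp
  have "dec_skip D St ?chi (Suc k) (enc E x (Suc k))
      = dec_skip D St ?chi k (D (Suc k) *\<^sub>v (transpose_mat (E (Suc k)) *\<^sub>v enc E x k)
          + St (Suc k) *\<^sub>v (transpose_mat (S (Suc k)) *\<^sub>v enc E x k))"
    by simp
  also have "\<dots> = dec_skip D St ?chi k (enc E x k)"
    unfolding path skip split ..
  also have "\<dots> = x"
    using Suc by simp
  finally show ?case .
qed simp

lemma linear_frame_reconstruction:
  assumes E: "\<And>l. E l \<in> carrier_mat (d (l-1)) (d l)"
    and D: "\<And>l. D l \<in> carrier_mat (d (l-1)) (d l)"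
    and DE: "\<forall>l\<in>{1..k}. D l * transpose_mat (E l) = 1\<^sub>m (d (l-1))"
  shows "let B = chain E (d 0) k; Bt = chain D (d 0) k
    in Bt * transpose_mat B = 1\<^sub>m (d 0)
       \<and> (\<forall>x\<in>carrier_vec (d 0). x = frame_expand B Bt x)
       \<and> (\<forall>x\<in>carrier_vec (d 0). net_noskip E D k x = (Bt * transpose_mat B) *\<^sub>v x)"
proof -
  let ?B = "chain E (d 0) k" and ?Bt = "chain D (d 0) k"
  note gram = chain_gram[OF E D DE]
  have "frame_expand ?B ?Bt x = x" if x: "x \<in> carrier_vec (d 0)" for x
  proof -
    have "frame_expand ?B ?Bt x = (?Bt * transpose_mat ?B) *\<^sub>v x"
      by (rule frame_expand_eq_mult)
        (use x chain_carrier[of D d, OF D, of k] chain_carrier[of E d, OF E, of k] in auto)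
    then show ?thesis using gram x by simp
  qed
  moreover have "net_noskip E D k x = (?Bt * transpose_mat ?B) *\<^sub>v x" if x: "x \<in> carrier_vec (d 0)" for x
    using dec_enc_eq[OF E D DE x] gram x by (simp add: net_noskip_def)
  ultimately show ?thesis
    using gram by (simp add: Let_def)
qed

lemma skip_frame_reconstruction:
  assumes E: "\<And>l. E l \<in> carrier_mat (d (l-1)) (d l)"
    and D: "\<And>l. D l \<in> carrier_mat (d (l-1)) (d l)"
    and S: "\<And>l. S l \<in> carrier_mat (d (l-1)) (e l)"
    and St: "\<And>l. St l \<in> carrier_mat (d (l-1)) (e l)"
    and DE: "\<forall>l\<in>{1..k}. D l * transpose_mat (E l) = a \<cdot>\<^sub>m 1\<^sub>m (d (l-1))"
    and SS: "\<forall>l\<in>{1..k}. St l * transpose_mat (S l) = b \<cdot>\<^sub>m 1\<^sub>m (d (l-1))"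
    and ab: "a + b = 1"
  shows "let B = skip_frame E S (d 0) k; Bt = skip_frame D St (d 0) k
    in (\<forall>x\<in>carrier_vec (d 0). net_skip E D S St k x = (Bt * transpose_mat B) *\<^sub>v x)
       \<and> Bt * transpose_mat B = 1\<^sub>m (d 0)
       \<and> (\<forall>x\<in>carrier_vec (d 0). x = frame_expand B Bt x)"
proof -
  let ?B = "skip_frame E S (d 0) k" and ?Bt = "skip_frame D St (d 0) k"
  note gram = skip_frame_gram[OF E D S St DE SS ab]
  have "frame_expand ?B ?Bt x = x" if x: "x \<in> carrier_vec (d 0)" for x
  proof -
    have "dim_col (St l) = dim_col (S l)" for l
      using S[of l] St[of l] by simp
    then have "dim_col ?Bt = dim_col ?B"
      unfolding skip_frame_def
      by (intro foldl_hcat_dim_col)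
        (use chain_carrier[of D d, OF D, of k] chain_carrier[of E d, OF E, of k] in auto)
    then have "frame_expand ?B ?Bt x = (?Bt * transpose_mat ?B) *\<^sub>v x"
      by (intro frame_expand_eq_mult) (use x in \<open>simp_all add: skip_frame_def foldl_hcat_dim_row\<close>)
    then show ?thesis using gram x by simp
  qed
  moreover have "net_skip E D S St k x = (?Bt * transpose_mat ?B) *\<^sub>v x" if x: "x \<in> carrier_vec (d 0)" for x
    using dec_skip_enc_eq[OF E D S St DE SS ab x] gram x by (simp add: net_skip_def)
  ultimately show ?thesis
    using gram by (simp add: Let_def)
qed

theorem proposition3:
  fixes \<kappa> r :: nat and \<alpha> :: real and m q :: "nat \<Rightarrow> nat"
    and \<Phi> \<Phi>t :: "nat \<Rightarrow> real mat"
    and \<psi> \<psi>t :: "nat \<Rightarrow> nat \<Rightarrow> nat \<Rightarrow> real vec"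
  assumes kappa: "\<kappa> \<ge> 1"
    and r_pos: "r \<ge> 1"
    and r_le: "\<forall>l\<le>\<kappa>. r \<le> m l"
    and alpha: "\<alpha> > 0"
    and Phi_dim: "\<forall>l\<in>{1..\<kappa>}. \<Phi> l \<in> carrier_mat (m (l-1)) (m l)"
    and Phit_dim: "\<forall>l\<in>{1..\<kappa>}. \<Phi>t l \<in> carrier_mat (m (l-1)) (m l)"
    and psi_dim: "\<forall>l\<in>{1..\<kappa>}. \<forall>j<q l. \<forall>k<q (l-1). dim_vec (\<psi> l j k) = r"
    and psit_dim: "\<forall>l\<in>{1..\<kappa>}. \<forall>j<q (l-1). \<forall>k<q l. dim_vec (\<psi>t l j k) = r"
  shows
    "((\<forall>l\<in>{1..\<kappa>}. \<Phi>t l * transpose_mat (\<Phi> l) = \<alpha> \<cdot>\<^sub>m 1\<^sub>m (m (l-1))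
          \<and> filtPsi r q \<psi> l * transpose_mat (filtPsit r q \<psi>t l)
              = (1 / (real r * \<alpha>)) \<cdot>\<^sub>m 1\<^sub>m (r * q (l-1)))
      \<longrightarrow> (let B = chain (encE m q \<Phi> \<psi>) (m 0 * q 0) \<kappa>;
               Bt = chain (decD m q \<Phi>t \<psi>t) (m 0 * q 0) \<kappa>
           in Bt * transpose_mat B = 1\<^sub>m (m 0 * q 0)
              \<and> (\<forall>x\<in>carrier_vec (m 0 * q 0). x = frame_expand B Bt x)
              \<and> (\<forall>x\<in>carrier_vec (m 0 * q 0).
                   net_noskip (encE m q \<Phi> \<psi>) (decD m q \<Phi>t \<psi>t) \<kappa> x
                     = (Bt * transpose_mat B) *\<^sub>v x)))
   \<and> ((\<forall>l\<in>{1..\<kappa>}. \<Phi>t l * transpose_mat (\<Phi> l) = \<alpha> \<cdot>\<^sub>m 1\<^sub>m (m (l-1))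
          \<and> filtPsi r q \<psi> l * transpose_mat (filtPsit r q \<psi>t l)
              = (1 / (real r * (\<alpha> + 1))) \<cdot>\<^sub>m 1\<^sub>m (r * q (l-1)))
      \<longrightarrow> (let B = skip_frame (encE m q \<Phi> \<psi>) (skipS m q \<psi>) (m 0 * q 0) \<kappa>;
               Bt = skip_frame (decD m q \<Phi>t \<psi>t) (skipSt m q \<psi>t) (m 0 * q 0) \<kappa>
           in (\<forall>x\<in>carrier_vec (m 0 * q 0).
                 net_skip (encE m q \<Phi> \<psi>) (decD m q \<Phi>t \<psi>t) (skipS m q \<psi>) (skipSt m q \<psi>t) \<kappa> x
                   = (Bt * transpose_mat B) *\<^sub>v x)
              \<and> Bt * transpose_mat B = 1\<^sub>m (m 0 * q 0)
              \<and> (\<forall>x\<in>carrier_vec (m 0 * q 0). x = frame_expand B Bt x)))"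
    (is "(?noskip \<longrightarrow> ?linear) \<and> (?skip \<longrightarrow> ?skipped)")
proof -
  let ?E = "encE m q \<Phi> \<psi>" and ?D = "decD m q \<Phi>t \<psi>t" and ?S = "skipS m q \<psi>" and ?St = "skipSt m q \<psi>t"
  define d where "d l = q l * m l" for l
  have N: "m 0 * q 0 = d 0" by (simp add: d_def)
  have dims: "?E l \<in> carrier_mat (d (l-1)) (d l)" "?D l \<in> carrier_mat (d (l-1)) (d l)"
    "?S l \<in> carrier_mat (d (l-1)) (q l * m (l-1))" "?St l \<in> carrier_mat (d (l-1)) (q l * m (l-1))" for l
    by (simp_all add: d_def encE_def decD_def skipS_def skipSt_def blockmat_def)
  note grams = network_layer_grams[OF r_le Phi_dim Phit_dim psi_dim psit_dim, folded d_def]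
  have r_gt0: "real r > 0" using r_pos by simp
  show ?thesis
  proof (intro conjI impI)
    assume ?noskip
    have one: "\<alpha> * (1 / (real r * \<alpha>)) * real r = 1" using alpha r_gt0 by simp
    have "\<forall>l\<in>{1..\<kappa>}. ?D l * transpose_mat (?E l) = 1\<^sub>m (d (l-1))"
      using grams[OF \<open>?noskip\<close>] unfolding one one_smult_mat by blast
    then show ?linear
      unfolding N by (rule linear_frame_reconstruction[where d = d, OF dims(1,2)])
  next
    assume ?skip
    define c where "c = 1 / (real r * (\<alpha> + 1))"
    have "\<alpha> * c * real r + c * real r = (\<alpha> + 1) * c * real r" by (simp add: algebra_simps)
    also have "\<dots> = 1" using alpha r_gt0 by (simp add: c_def)
    finally show ?skipped
      using grams[OF \<open>?skip\<close>[folded c_def]] unfolding N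
      by (intro skip_frame_reconstruction[where d = d and e = "\<lambda>l. q l * m (l-1)", OF dims]) simp_all
  qed
qed

end
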